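(* Let $q\ge1$, $\alpha\in(0,q)$, $K\ge0$ and $l\in\{1,\dots,q\}$. There is a constant $C=C(\alpha,q,K)<\infty$ such that for all $x,x'\in\mathbb R^q$ and $0<t\le t'\le K$, $$\int\!\!\int\big|(p_{t,l}(w-x)-p_{t',l}(w-x'))(p_{t,l}(z-x)-p_{t',l}(z-x'))\big|\,(|w-z|^{-\alpha}+1)\,dw\,dz\le C\,t^{-1-\alpha/2}\Big(1\wedge\frac{|x-x'|^2+|t-t'|}{t}\Big),$$ where the integrals are over $\mathbb R^q$.
   Context: $p_t(x)=(2\pi t)^{-q/2}\exp(-|x|^2/(2t))$ is the heat kernel on $\mathbb R^q$ and $p_{t,l}(x)=\partial_{x_l}p_t(x)=-\frac{x_l}{t}p_t(x)$. *)

theory Defs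
  imports "HOL-Analysis.Analysis"
begin

definition heat_kernel :: "real \<Rightarrow> real^'q \<Rightarrow> real" where
  "heat_kernel t x = (2 * pi * t) powr (- real CARD('q) / 2) * exp (- (norm x)\<^sup>2 / (2 * t))"

text \<open>Spatial partial derivative in coordinate l: p_{t,l}(x) = -(x_l / t) p_t(x).\<close>
definition heat_kernel_deriv :: "real \<Rightarrow> 'q \<Rightarrow> real^'q \<Rightarrow> real" where
  "heat_kernel_deriv t l x = - (x $ l / t) * heat_kernel t x"

end

theory Submission
  imports Defs
begin

text \<open>
  Write f(w) = p_{t,l}(w - x) - p_{t',l}(w - x'). Every p_{s,l}(y) is dominated by
  s^{-(q+1)/2} G(|y|/sqrt s), where G(r) = (1 + r)^3 exp(-r^2/8) is bounded and integrable on R^q.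
  If D = |x - x'|^2 + |t - t'| < t, the mean value theorem (in sqrt s for the time increment,
  along the segment from w - x to w - x' for the space increment) improves this to
  |f(w)| <= C sigma t^{-(q+1)/2} G(|w - x|/sqrt t) with sigma = sqrt (D/t); otherwise the
  triangle inequality gives such a bound with sigma = 1.

  For any F >= |f| with sup F <= L_inf and int F <= L_1, splitting the Riesz kernel at
  |w - z| = r gives  int int |f(w) f(z)| (|w - z|^{-alpha} + 1) <= L_1 ((r^{-alpha} + 1) L_1 +
  L_inf r^{q-alpha} I_alpha),  where I_alpha = int_{|u|<1} |u|^{-alpha} is finite because alpha < q.
  The choice r = sqrt t turns this into C t^{-1-alpha/2} sigma^2, and sigma^2 = min 1 (D/t) in both
  cases.
\<close>

section \<open>Integrals over Euclidean space\<close>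

lemma nn_integral_lborel_rescale:
  fixes g :: "'a::euclidean_space \<Rightarrow> ennreal"
  assumes [measurable]: "g \<in> borel_measurable borel" and c: "0 < c"
  shows "(\<integral>\<^sup>+w. g ((w - x) /\<^sub>R c) \<partial>lborel) = ennreal (c ^ DIM('a)) * (\<integral>\<^sup>+u. g u \<partial>lborel)"
proof -
  have "c \<noteq> 0" using c by simp
  from lborel_affine[OF this, of x]
  have "(\<integral>\<^sup>+w. g ((w - x) /\<^sub>R c) \<partial>lborel) =
     (\<integral>\<^sup>+w. g ((w - x) /\<^sub>R c) \<partial>density (distr lborel borel (\<lambda>u. x + c *\<^sub>R u)) (\<lambda>_. \<bar>c\<bar> ^ DIM('a)))"
    by simp
  also have "\<dots> = ennreal (c ^ DIM('a)) * (\<integral>\<^sup>+u. g u \<partial>lborel)"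
    using c by (simp add: nn_integral_density nn_integral_distr nn_integral_cmult)
  finally show ?thesis .
qed

lemma ennreal_le_suminf: "(f::nat \<Rightarrow> ennreal) n \<le> suminf f"
  using sum_le_suminf[OF summableI, of "{n}" f] by simp

lemma exists_dyadic_bracket:
  fixes v :: real assumes "0 < v" "v < 1"
  shows "\<exists>n. (1/2) ^ Suc n < v \<and> v \<le> (1/2) ^ n"
proof -
  define k where "k = \<lfloor>log 2 (1/v)\<rfloor>"
  have k0: "k \<ge> 0" using assms unfolding k_def by simp
  have "2 powr k \<le> 2 powr (log 2 (1/v))" unfolding k_def by (intro powr_mono) auto
  hence lower: "2 ^ nat k \<le> 1/v" using assms k0 by (simp add: powr_realpow[symmetric])
  have "2 powr (log 2 (1/v)) < 2 powr (k + 1)" unfolding k_def by (intro powr_less_mono) linarith+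
  hence upper: "1/v < 2 ^ Suc (nat k)" using assms k0 by (simp add: powr_realpow[symmetric] powr_add)
  show ?thesis
    using lower upper assms by (intro exI[of _ "nat k"]) (simp add: power_one_over field_simps)
qed

lemma nn_integral_cball_series_finite:
  fixes b r :: "nat \<Rightarrow> real"
  assumes b: "\<And>k. 0 \<le> b k" and r: "\<And>k. 0 \<le> r k"
    and sum: "summable (\<lambda>k. b k * r k ^ DIM('a))"
  shows "(\<integral>\<^sup>+u. (\<Sum>k. ennreal (b k * indicator (cball (0::'a::euclidean_space) (r k)) u)) \<partial>lborel) < \<infinity>"
proof -
  define V where "V = unit_ball_vol (real DIM('a))"
  have shell: "(\<integral>\<^sup>+u. ennreal (b k * indicator (cball (0::'a) (r k)) u) \<partial>lborel)
      = ennreal (V * (b k * r k ^ DIM('a)))" for k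
  proof -
    have "(\<integral>\<^sup>+u. ennreal (b k * indicator (cball (0::'a) (r k)) u) \<partial>lborel)
        = ennreal (b k) * emeasure lborel (cball (0::'a) (r k))"
      by (subst nn_integral_cmult_indicator[symmetric]) (auto intro!: nn_integral_cong simp: indicator_def)
    also have "\<dots> = ennreal (V * (b k * r k ^ DIM('a)))"
      using b r by (simp add: emeasure_cball V_def ennreal_mult'[symmetric] mult_ac)
    finally show ?thesis .
  qed
  have "(\<integral>\<^sup>+u. (\<Sum>k. ennreal (b k * indicator (cball (0::'a) (r k)) u)) \<partial>lborel)
      = (\<Sum>k. ennreal (V * (b k * r k ^ DIM('a))))"
    by (subst nn_integral_suminf) (measurable, simp_all add: shell pred_def borel_closed)
  also have "\<dots> < \<infinity>"
    using sum b r by (simp add: V_def ennreal_suminf_neq_top less_top[symmetric] summable_mult)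
  finally show ?thesis .
qed

lemma nn_integral_ball_norm_powr_finite:
  assumes a: "0 < \<alpha>" and aq: "\<alpha> < real DIM('a::euclidean_space)"
  shows "(\<integral>\<^sup>+u. ennreal (indicator (ball (0::'a) 1) u * norm u powr (-\<alpha>)) \<partial>lborel) < \<infinity>"
proof -
  define b where "b k = 2 powr ((real k + 1) * \<alpha>)" for k :: nat
  have shells: "ennreal (indicator (ball (0::'a) 1) u * norm u powr (-\<alpha>))
      \<le> (\<Sum>k. ennreal (b k * indicator (cball 0 ((1/2) ^ k)) u))" for u
  proof (cases "u \<in> ball 0 1 \<and> u \<noteq> 0")
    case False
    then show ?thesis by (auto simp: indicator_def)
  next
    case True
    then obtain n where n: "(1/2) ^ Suc n < norm u" "norm u \<le> (1/2) ^ n"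
      using exists_dyadic_bracket[of "norm u"] by auto
    have "norm u powr (-\<alpha>) \<le> ((1/2) ^ Suc n) powr (-\<alpha>)"
      using n(1) a by (intro powr_mono2') auto
    also have "\<dots> = b n"
      unfolding b_def by (simp add: powr_realpow[symmetric] powr_powr powr_minus_divide powr_divide)
        (simp add: powr_mult powr_powr powr_add algebra_simps)
    finally have "ennreal (indicator (ball 0 1) u * norm u powr (-\<alpha>))
        \<le> ennreal (b n * indicator (cball 0 ((1/2) ^ n)) u)"
      using True n(2) by (auto simp: indicator_def intro: ennreal_leI)
    also have "\<dots> \<le> (\<Sum>k. ennreal (b k * indicator (cball 0 ((1/2) ^ k)) u))"
      by (rule ennreal_le_suminf)
    finally show ?thesis .
  qed
  have "b k * ((1/2) ^ k) ^ DIM('a) = 2 powr \<alpha> * (2 powr (\<alpha> - real DIM('a))) ^ k" for k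
    unfolding b_def
    by (simp add: powr_realpow[symmetric] powr_powr powr_add powr_diff field_simps
        power_mult[symmetric] mult.commute)
  moreover have "2 powr (\<alpha> - real DIM('a)) < 1"
    using aq by (simp add: powr_less_one)
  ultimately have "summable (\<lambda>k. b k * ((1/2) ^ k) ^ DIM('a))"
    by (simp add: summable_mult summable_geometric)
  then have "(\<integral>\<^sup>+u. (\<Sum>k. ennreal (b k * indicator (cball (0::'a) ((1/2) ^ k)) u)) \<partial>lborel) < \<infinity>"
    by (intro nn_integral_cball_series_finite) (auto simp: b_def)
  then show ?thesis
    using nn_integral_mono[OF shells] by (rule le_less_trans[rotated])
qed

lemma borel_measurable_norm_powr [measurable]:
  "(\<lambda>x::'a::real_normed_vector. norm x powr (a::real)) \<in> borel_measurable borel"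
  by (rule powr_real_measurable) (auto intro: borel_measurable_continuous_onI continuous_intros)

lemma nn_integral_ball_norm_powr_rescale:
  fixes z :: "'a::euclidean_space"
  assumes r: "0 < r"
  shows "(\<integral>\<^sup>+w. ennreal (indicator (ball z r) w * norm (w - z) powr (-\<alpha>)) \<partial>lborel)
     = ennreal (r powr (-\<alpha>) * r ^ DIM('a))
       * (\<integral>\<^sup>+u. ennreal (indicator (ball (0::'a) 1) u * norm u powr (-\<alpha>)) \<partial>lborel)"
proof -
  define g where "g u = ennreal (indicator (ball (0::'a) 1) u * norm u powr (-\<alpha>))" for u
  have [measurable]: "g \<in> borel_measurable borel"
    unfolding g_def
    by (intro measurable_compose[OF _ measurable_ennreal] borel_measurable_times
        borel_measurable_indicator borel_measurable_norm_powr) (simp add: borel_open)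
  have "ennreal (indicator (ball z r) w * norm (w - z) powr (-\<alpha>))
      = ennreal (r powr (-\<alpha>)) * g ((w - z) /\<^sub>R r)" for w
  proof -
    have norm_eq: "norm ((w - z) /\<^sub>R r) = norm (w - z) / r"
      using r by (simp add: divide_inverse_commute)
    have ball_eq: "(w - z) /\<^sub>R r \<in> ball 0 1 \<longleftrightarrow> w \<in> ball z r"
      by (simp only: mem_ball dist_0_norm norm_eq) (simp add: dist_norm norm_minus_commute r)
    have "(norm (w - z) / r) powr (-\<alpha>) = r powr \<alpha> * norm (w - z) powr (-\<alpha>)"
      using r by (subst powr_divide) (auto simp: powr_minus[of r] divide_inverse)
    moreover have "r powr (-\<alpha>) * r powr \<alpha> = 1"
      using r by (simp add: powr_minus)
    ultimately show ?thesis
      unfolding g_def indicator_def ball_eq norm_eq using r by (simp add: ennreal_mult'[symmetric])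
  qed
  then have "(\<integral>\<^sup>+w. ennreal (indicator (ball z r) w * norm (w - z) powr (-\<alpha>)) \<partial>lborel)
      = ennreal (r powr (-\<alpha>)) * (\<integral>\<^sup>+w. g ((w - z) /\<^sub>R r) \<partial>lborel)"
    by (simp add: nn_integral_cmult)
  also have "\<dots> = ennreal (r powr (-\<alpha>) * r ^ DIM('a)) * (\<integral>\<^sup>+u. g u \<partial>lborel)"
    using r by (simp add: nn_integral_lborel_rescale ennreal_mult' mult.assoc)
  finally show ?thesis unfolding g_def .
qed

section \<open>The Riesz-weighted energy\<close>

definition riesz_energy :: "real \<Rightarrow> ('a::euclidean_space \<Rightarrow> real) \<Rightarrow> ennreal" where
  "riesz_energy \<alpha> f =
     (\<integral>\<^sup>+z. (\<integral>\<^sup>+w. ennreal (\<bar>f w * f z\<bar> * (norm (w - z) powr (-\<alpha>) + 1)) \<partial>lborel) \<partial>lborel)"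

lemma riesz_weight_split:
  assumes a: "0 \<le> a" "a \<le> N" and r: "0 < r" and \<alpha>: "0 < \<alpha>"
  shows "a * (norm (w - z) powr (-\<alpha>) + 1)
     \<le> (r powr (-\<alpha>) + 1) * a + N * (indicator (ball z r) w * norm (w - z) powr (-\<alpha>))"
proof (cases "w \<in> ball z r")
  case True
  have "a * norm (w - z) powr (-\<alpha>) \<le> N * norm (w - z) powr (-\<alpha>)"
    using a by (intro mult_right_mono) auto
  moreover have "a \<le> (r powr (-\<alpha>) + 1) * a"
    using a by (simp add: algebra_simps)
  ultimately show ?thesis
    using True by (simp add: ring_distribs)
next
  case False
  then have "norm (w - z) powr (-\<alpha>) \<le> r powr (-\<alpha>)"
    using r \<alpha> by (intro powr_mono2') (auto simp: dist_norm norm_minus_commute)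
  then show ?thesis
    using False a by (simp add: algebra_simps mult_left_mono)
qed

lemma nn_integral_riesz_weight_le:
  fixes F :: "'a::euclidean_space \<Rightarrow> real"
  assumes [measurable]: "F \<in> borel_measurable borel"
    and F: "\<And>w. 0 \<le> F w" "\<And>w. F w \<le> Linf" "(\<integral>\<^sup>+w. ennreal (F w) \<partial>lborel) \<le> ennreal L1"
    and I: "(\<integral>\<^sup>+u. ennreal (indicator (ball (0::'a) 1) u * norm u powr (-\<alpha>)) \<partial>lborel) \<le> ennreal I"
    and r: "0 < r" and \<alpha>: "0 < \<alpha>" and nonneg: "0 \<le> L1" "0 \<le> I"
  shows "(\<integral>\<^sup>+w. ennreal (F w * (norm (w - z) powr (-\<alpha>) + 1)) \<partial>lborel)
     \<le> ennreal ((r powr (-\<alpha>) + 1) * L1 + Linf * (r powr (-\<alpha>) * r ^ DIM('a) * I))"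
proof -
  define R where "R w = ennreal (indicator (ball z r) w * norm (w - z) powr (-\<alpha>))" for w
  have [measurable]: "R \<in> borel_measurable borel"
    unfolding R_def
    by (intro measurable_compose[OF _ measurable_ennreal] borel_measurable_times
        borel_measurable_indicator measurable_compose[OF _ borel_measurable_norm_powr]
        borel_measurable_diff measurable_ident_sets measurable_const) (simp_all add: borel_open)
  have N: "0 \<le> Linf" using F(1,2) order_trans by blast
  have "(\<integral>\<^sup>+w. ennreal (F w * (norm (w - z) powr (-\<alpha>) + 1)) \<partial>lborel)
      \<le> (\<integral>\<^sup>+w. ennreal (r powr (-\<alpha>) + 1) * ennreal (F w) + ennreal Linf * R w \<partial>lborel)"
  proof (intro nn_integral_mono)
    fix w
    have "ennreal (F w * (norm (w - z) powr (-\<alpha>) + 1))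
        \<le> ennreal ((r powr (-\<alpha>) + 1) * F w + Linf * (indicator (ball z r) w * norm (w - z) powr (-\<alpha>)))"
      using F r \<alpha> by (intro ennreal_leI riesz_weight_split)
    also have "\<dots> = ennreal (r powr (-\<alpha>) + 1) * ennreal (F w) + ennreal Linf * R w"
      unfolding R_def using F N by (simp add: ennreal_plus ennreal_mult)
    finally show "ennreal (F w * (norm (w - z) powr (-\<alpha>) + 1))
        \<le> ennreal (r powr (-\<alpha>) + 1) * ennreal (F w) + ennreal Linf * R w" .
  qed
  also have "\<dots> = ennreal (r powr (-\<alpha>) + 1) * (\<integral>\<^sup>+w. ennreal (F w) \<partial>lborel)
      + ennreal Linf * (\<integral>\<^sup>+w. R w \<partial>lborel)"
    by (simp add: nn_integral_add nn_integral_cmult)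
  also have "\<dots> \<le> ennreal (r powr (-\<alpha>) + 1) * ennreal L1
      + ennreal Linf * (ennreal (r powr (-\<alpha>) * r ^ DIM('a)) * ennreal I)"
    unfolding R_def nn_integral_ball_norm_powr_rescale[OF r]
    by (intro add_mono mult_left_mono F(3) I) auto
  also have "\<dots> = ennreal ((r powr (-\<alpha>) + 1) * L1 + Linf * (r powr (-\<alpha>) * r ^ DIM('a) * I))"
    using N r nonneg by (simp add: ennreal_mult ennreal_plus)
  finally show ?thesis .
qed

lemma riesz_energy_le:
  fixes f F :: "'a::euclidean_space \<Rightarrow> real"
  assumes [measurable]: "F \<in> borel_measurable borel"
    and f: "\<And>w. \<bar>f w\<bar> \<le> F w"
    and F: "\<And>w. F w \<le> Linf" "(\<integral>\<^sup>+w. ennreal (F w) \<partial>lborel) \<le> ennreal L1"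
    and I: "(\<integral>\<^sup>+u. ennreal (indicator (ball (0::'a) 1) u * norm u powr (-\<alpha>)) \<partial>lborel) \<le> ennreal I"
    and r: "0 < r" and \<alpha>: "0 < \<alpha>" and nonneg: "0 \<le> L1" "0 \<le> I"
  shows "riesz_energy \<alpha> f
     \<le> ennreal (L1 * ((r powr (-\<alpha>) + 1) * L1 + Linf * (r powr (-\<alpha>) * r ^ DIM('a) * I)))"
proof -
  define B where "B = (r powr (-\<alpha>) + 1) * L1 + Linf * (r powr (-\<alpha>) * r ^ DIM('a) * I)"
  have F0: "0 \<le> F w" for w
    using f[of w] by linarith
  have B0: "0 \<le> B"
    using order_trans[OF F0 F(1)] r nonneg unfolding B_def by simp
  have "(\<integral>\<^sup>+w. ennreal (\<bar>f w * f z\<bar> * (norm (w - z) powr (-\<alpha>) + 1)) \<partial>lborel)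
      \<le> (\<integral>\<^sup>+w. ennreal (F z) * ennreal (F w * (norm (w - z) powr (-\<alpha>) + 1)) \<partial>lborel)" for z
  proof (intro nn_integral_mono)
    fix w
    have "\<bar>f w * f z\<bar> \<le> F z * F w"
      unfolding abs_mult using f F0 by (simp add: mult.commute mult_mono')
    then have "\<bar>f w * f z\<bar> * (norm (w - z) powr (-\<alpha>) + 1) \<le> F z * (F w * (norm (w - z) powr (-\<alpha>) + 1))"
      by (subst mult.assoc[symmetric]) (rule mult_right_mono, auto)
    then show "ennreal (\<bar>f w * f z\<bar> * (norm (w - z) powr (-\<alpha>) + 1))
        \<le> ennreal (F z) * ennreal (F w * (norm (w - z) powr (-\<alpha>) + 1))"
      using F0 by (simp add: ennreal_mult[symmetric] ennreal_leI)
  qed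
  also have "\<dots> z \<le> ennreal (F z) * ennreal B" for z
    unfolding B_def
    by (simp add: nn_integral_cmult mult_left_mono nn_integral_riesz_weight_le F0 F I r \<alpha> nonneg)
  finally have "riesz_energy \<alpha> f \<le> (\<integral>\<^sup>+z. ennreal (F z) * ennreal B \<partial>lborel)"
    unfolding riesz_energy_def by (intro nn_integral_mono)
  also have "\<dots> \<le> ennreal L1 * ennreal B"
    by (simp add: nn_integral_multc mult_right_mono F(2))
  finally show ?thesis
    using nonneg B0 by (simp add: B_def ennreal_mult)
qed

lemma riesz_energy_le_scaled:
  fixes f F :: "'a::euclidean_space \<Rightarrow> real"
  assumes [measurable]: "F \<in> borel_measurable borel"
    and f: "\<And>w. \<bar>f w\<bar> \<le> F w"
    and F: "\<And>w. F w \<le> Binf * \<sigma> / sqrt t ^ (DIM('a) + 1)"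
      "(\<integral>\<^sup>+w. ennreal (F w) \<partial>lborel) \<le> ennreal (B1 * \<sigma> / sqrt t)"
    and I: "(\<integral>\<^sup>+u. ennreal (indicator (ball (0::'a) 1) u * norm u powr (-\<alpha>)) \<partial>lborel) \<le> ennreal I"
    and t: "0 < t" "t \<le> K" and \<alpha>: "0 < \<alpha>" and nonneg: "0 \<le> \<sigma>" "0 \<le> B1" "0 \<le> I"
  shows "riesz_energy \<alpha> f
     \<le> ennreal (((1 + K powr (\<alpha>/2)) * B1\<^sup>2 + B1 * Binf * I) * t powr (-1 - \<alpha>/2) * \<sigma>\<^sup>2)"
proof -
  define u where "u = sqrt t"
  have u: "0 < u" "u\<^sup>2 = t"
    using t by (auto simp: u_def)
  define P where "P = u powr (-\<alpha>)"
  have P_eq: "P = t powr (-\<alpha>/2)"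
    using t by (simp add: P_def u_def powr_half_sqrt[symmetric] powr_powr)
  have t_powr: "t powr (-1 - \<alpha>/2) = P / t"
  proof -
    have "t powr (-1 - \<alpha>/2) = t powr (-\<alpha>/2) * t powr (-1)"
      by (subst powr_add[symmetric]) (simp add: algebra_simps)
    then show ?thesis
      using t by (simp add: P_eq powr_minus_divide)
  qed
  have "t powr (\<alpha>/2) * P \<le> K powr (\<alpha>/2) * P"
    using t \<alpha> by (intro mult_right_mono powr_mono2) (auto simp: P_def)
  moreover have "t powr (\<alpha>/2) * P = 1"
    using t by (simp add: P_eq powr_add[symmetric])
  ultimately have "P + 1 \<le> (1 + K powr (\<alpha>/2)) * P"
    by (simp add: algebra_simps)
  then have "(P + 1) * B1\<^sup>2 \<le> (1 + K powr (\<alpha>/2)) * P * B1\<^sup>2"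
    by (intro mult_right_mono) auto
  then have bound: "((P + 1) * B1\<^sup>2 + B1 * Binf * P * I) * (\<sigma>\<^sup>2 / t)
      \<le> ((1 + K powr (\<alpha>/2)) * B1\<^sup>2 + B1 * Binf * I) * P * (\<sigma>\<^sup>2 / t)"
    using t by (intro mult_right_mono) (simp_all add: algebra_simps)
  have "riesz_energy \<alpha> f \<le> ennreal (B1 * \<sigma> / u * ((P + 1) * (B1 * \<sigma> / u)
        + Binf * \<sigma> / u ^ (DIM('a) + 1) * (P * u ^ DIM('a) * I)))"
    unfolding P_def using F u nonneg by (intro riesz_energy_le[OF _ f _ _ I _ \<alpha>]) (auto simp: u_def)
  also have "B1 * \<sigma> / u * ((P + 1) * (B1 * \<sigma> / u)
        + Binf * \<sigma> / u ^ (DIM('a) + 1) * (P * u ^ DIM('a) * I))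
      = ((P + 1) * B1\<^sup>2 + B1 * Binf * P * I) * (\<sigma>\<^sup>2 / t)"
    using u by (simp add: field_simps power2_eq_square)
  also have "\<dots> \<le> ((1 + K powr (\<alpha>/2)) * B1\<^sup>2 + B1 * Binf * I) * P * (\<sigma>\<^sup>2 / t)"
    by (fact bound)
  also have "\<dots> = ((1 + K powr (\<alpha>/2)) * B1\<^sup>2 + B1 * Binf * I) * t powr (-1 - \<alpha>/2) * \<sigma>\<^sup>2"
    unfolding t_powr by simp
  finally show ?thesis
    using ennreal_leI order_trans by blast
qed

section \<open>The Gaussian profile\<close>

definition gauss_profile :: "real \<Rightarrow> real" where
  "gauss_profile \<rho> = (1 + \<rho>) ^ 3 * exp (-\<rho>\<^sup>2/8)"

lemma exp_ge_power_div_fact: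
  assumes "0 \<le> (x::real)"
  shows "x ^ N / fact N \<le> exp x"
proof -
  have "(\<Sum>n\<in>{N}. x ^ n /\<^sub>R fact n) \<le> (\<Sum>n. x ^ n /\<^sub>R fact n)"
    using assms by (intro sum_le_suminf sums_summable[OF exp_converges]) auto
  also have "\<dots> = exp x"
    using exp_converges[of x] sums_unique by metis
  finally show ?thesis
    by (simp add: divide_inverse_commute)
qed

lemma power_mult_exp_neg_sq_le:
  assumes \<rho>: "0 \<le> (\<rho>::real)"
  shows "(1 + \<rho>) ^ N * exp (-\<rho>\<^sup>2/8) \<le> 16 ^ N * fact N"
proof -
  have "(1 + \<rho>) ^ N \<le> 16 ^ N * fact N * exp (\<rho>\<^sup>2/8)"
  proof (cases "\<rho> \<ge> 1")
    case True
    have "(1 + \<rho>) ^ N \<le> (2 * \<rho>) ^ N"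
      using True by (intro power_mono) auto
    also have "\<dots> = 2 ^ N * \<rho> ^ N"
      by (simp add: power_mult_distrib)
    also have "\<dots> \<le> 2 ^ N * \<rho> ^ (2 * N)"
      using True by (intro mult_left_mono power_increasing) auto
    also have "\<dots> = 16 ^ N * fact N * ((\<rho>\<^sup>2/8) ^ N / fact N)"
    proof -
      have "\<rho> ^ (2 * N) = 8 ^ N * (\<rho>\<^sup>2/8) ^ N"
        by (simp add: power_mult power_divide)
      moreover have "(16::real) ^ N = 2 ^ N * 8 ^ N"
        by (simp flip: power_mult_distrib)
      ultimately show ?thesis
        by simp
    qed
    also have "\<dots> \<le> 16 ^ N * fact N * exp (\<rho>\<^sup>2/8)"
      by (intro mult_left_mono exp_ge_power_div_fact) auto
    finally show ?thesis .
  next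
    case False
    have "(1 + \<rho>) ^ N \<le> 16 ^ N"
      using False \<rho> by (intro power_mono) auto
    also have "\<dots> \<le> 16 ^ N * (fact N * exp (\<rho>\<^sup>2/8))"
      using mult_mono[OF fact_ge_1 one_le_exp_iff[THEN iffD2]] by simp
    finally show ?thesis
      by (simp add: mult.assoc)
  qed
  then have "(1 + \<rho>) ^ N * exp (-\<rho>\<^sup>2/8) \<le> 16 ^ N * fact N * exp (\<rho>\<^sup>2/8) * exp (-\<rho>\<^sup>2/8)"
    by (intro mult_right_mono) auto
  then show ?thesis
    by (simp add: mult.assoc flip: exp_add)
qed

lemma gauss_profile_nonneg: "0 \<le> \<rho> \<Longrightarrow> 0 \<le> gauss_profile \<rho>"
  by (simp add: gauss_profile_def)

lemma gauss_profile_le: "0 \<le> \<rho> \<Longrightarrow> gauss_profile \<rho> \<le> 16 ^ 3 * fact 3"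
  unfolding gauss_profile_def by (rule power_mult_exp_neg_sq_le)

lemma gauss_profile_mult_power_le:
  assumes "0 \<le> \<rho>"
  shows "gauss_profile \<rho> * (1 + \<rho>) ^ N \<le> 16 ^ (N + 3) * fact (N + 3)"
  using power_mult_exp_neg_sq_le[OF assms, of "N + 3"]
  by (simp add: gauss_profile_def power_add mult_ac)

lemma continuous_on_gauss_profile: "continuous_on A gauss_profile"
  unfolding gauss_profile_def by (intro continuous_intros) auto

lemma borel_measurable_gauss_profile_norm [measurable]:
  "(\<lambda>w::'a::euclidean_space. gauss_profile (norm (w - x) / c)) \<in> borel_measurable borel"
  by (rule measurable_compose[OF _ borel_measurable_continuous_onI[OF continuous_on_gauss_profile]])
    measurable

lemma nn_integral_gauss_profile_finite:
  "(\<integral>\<^sup>+u. ennreal (gauss_profile (norm (u::'a::euclidean_space))) \<partial>lborel) < \<infinity>"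
proof -
  define q where "q = DIM('a)"
  define M :: real where "M = 16 ^ (q + 1 + 3) * fact (q + 1 + 3)"
  define b where "b k = M * 2 ^ (q + 1) / (2 ^ k) ^ (q + 1)" for k :: nat
  have decay: "gauss_profile \<rho> \<le> M / (1 + \<rho>) ^ (q + 1)" if "0 \<le> \<rho>" for \<rho>
  proof -
    have "gauss_profile \<rho> * (1 + \<rho>) ^ (q + 1) \<le> M"
      unfolding M_def by (rule gauss_profile_mult_power_le[OF that])
    then show ?thesis
      using that by (simp add: pos_le_divide_eq)
  qed
  have shells: "ennreal (gauss_profile (norm u))
      \<le> (\<Sum>k. ennreal (b k * indicator (cball (0::'a) (2 ^ k)) u))" for u :: 'a
  proof -
    obtain n where n: "norm u \<le> 2 ^ n" "2 ^ n \<le> 2 * (1 + norm u)"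
    proof (cases "norm u \<le> 1")
      case True
      then show ?thesis using that[of 0] by simp
    next
      case False
      then have "0 < 1 / norm u" "1 / norm u < 1"
        by (auto simp: divide_less_eq)
      then obtain k where k: "(1/2) ^ Suc k < 1 / norm u" "1 / norm u \<le> (1/2) ^ k"
        using exists_dyadic_bracket by blast
      have "inverse (1 / norm u) < inverse ((1/2) ^ Suc k)"
        using k(1) by (intro less_imp_inverse_less) auto
      moreover have "inverse ((1/2) ^ k) \<le> inverse (1 / norm u)"
        using k(2) False by (intro le_imp_inverse_le) auto
      ultimately have "norm u < 2 ^ Suc k" "2 ^ k \<le> norm u"
        by (simp_all add: power_one_over)
      then show ?thesis
        using that[of "Suc k"] by simp
    qed
    have "gauss_profile (norm u) \<le> M / (1 + norm u) ^ (q + 1)"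
      by (rule decay) simp
    also have "\<dots> \<le> M / (2 ^ n / 2) ^ (q + 1)"
      using n(2) add_pos_nonneg[OF zero_less_one norm_ge_zero, of u]
      by (intro divide_left_mono power_mono mult_pos_pos zero_less_power) (auto simp: M_def)
    also have "\<dots> = b n"
      by (simp add: b_def power_divide)
    finally have "ennreal (gauss_profile (norm u)) \<le> ennreal (b n * indicator (cball 0 (2 ^ n)) u)"
      using n(1) by (simp add: indicator_def ennreal_leI)
    also have "\<dots> \<le> (\<Sum>k. ennreal (b k * indicator (cball (0::'a) (2 ^ k)) u))"
      by (rule ennreal_le_suminf)
    finally show ?thesis .
  qed
  have "b k * (2 ^ k) ^ q = M * 2 ^ (q + 1) * (1/2) ^ k" for k
    by (simp add: b_def power_one_over)
  then have "summable (\<lambda>k. b k * (2 ^ k) ^ DIM('a))"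
    by (simp add: q_def summable_mult summable_geometric)
  then have "(\<integral>\<^sup>+u. (\<Sum>k. ennreal (b k * indicator (cball (0::'a) (2 ^ k)) u)) \<partial>lborel) < \<infinity>"
    by (intro nn_integral_cball_series_finite) (auto simp: b_def M_def)
  then show ?thesis
    using nn_integral_mono[OF shells] by (rule le_less_trans[rotated])
qed

lemma nn_integral_gauss_profile_rescale:
  fixes x :: "'a::euclidean_space"
  assumes "0 < c"
  shows "(\<integral>\<^sup>+w. ennreal (gauss_profile (norm (w - x) / c)) \<partial>lborel)
     = ennreal (c ^ DIM('a)) * (\<integral>\<^sup>+u. ennreal (gauss_profile (norm (u::'a))) \<partial>lborel)"
proof -
  have "(\<integral>\<^sup>+w. ennreal (gauss_profile (norm (w - x) / c)) \<partial>lborel)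
      = (\<integral>\<^sup>+w. ennreal (gauss_profile (norm ((w - x) /\<^sub>R c))) \<partial>lborel)"
    using assms by (simp add: divide_inverse_commute)
  also have "\<dots> = ennreal (c ^ DIM('a)) * (\<integral>\<^sup>+u. ennreal (gauss_profile (norm (u::'a))) \<partial>lborel)"
    using measurable_compose[OF borel_measurable_gauss_profile_norm[of 0 1] measurable_ennreal]
    by (intro nn_integral_lborel_rescale assms) simp
  finally show ?thesis .
qed

section \<open>Pointwise bounds for the heat kernel derivative\<close>

lemma heat_kernel_eq:
  fixes y :: "real^'q::finite"
  assumes s: "0 < s"
  shows "heat_kernel s y
     = (2*pi) powr (-real CARD('q)/2) * exp (-(norm y)\<^sup>2/(2 * s)) / sqrt s ^ CARD('q)"
proof -
  have "s powr (real CARD('q)/2) = (s powr (1/2)) powr real CARD('q)"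
    by (simp add: powr_powr)
  also have "\<dots> = sqrt s ^ CARD('q)"
    using s by (simp add: powr_half_sqrt powr_realpow)
  finally have "s powr (-real CARD('q)/2) = inverse (sqrt s ^ CARD('q))"
    by (simp add: powr_minus)
  then show ?thesis
    using s unfolding heat_kernel_def by (simp add: powr_mult field_simps)
qed

lemma heat_kernel_deriv_sq_eq:
  fixes y :: "real^'q::finite"
  assumes "0 < \<sigma>"
  shows "heat_kernel_deriv (\<sigma>\<^sup>2) l y
     = - (y$l) * (2*pi) powr (-real CARD('q)/2) * exp (-(norm y)\<^sup>2/(2 * \<sigma>\<^sup>2)) / \<sigma> ^ (CARD('q) + 2)"
  using assms unfolding heat_kernel_deriv_def
  by (simp add: heat_kernel_eq field_simps power_add power2_eq_square)

lemma abs_heat_kernel_deriv_le: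
  fixes y :: "real^'q::finite"
  assumes s: "0 < s"
  shows "\<bar>heat_kernel_deriv s l y\<bar>
     \<le> (2*pi) powr (-real CARD('q)/2) / sqrt s ^ (CARD('q) + 1) * gauss_profile (norm y / sqrt s)"
proof -
  define S where "S = sqrt s"
  define c where "c = (2*pi) powr (-real CARD('q)/2)"
  define N where "N = CARD('q)"
  define \<rho> where "\<rho> = norm y / S"
  have S: "0 < S" "S\<^sup>2 = s"
    using s by (auto simp: S_def)
  have \<rho>: "0 \<le> \<rho>" "norm y = \<rho> * S"
    using S by (auto simp: \<rho>_def)
  have "\<bar>heat_kernel_deriv s l y\<bar> = \<bar>y$l\<bar> * c * exp (-(norm y)\<^sup>2/(2 * S\<^sup>2)) / S ^ (N + 2)"
    using heat_kernel_deriv_sq_eq[OF S(1), of l y] S by (simp add: c_def N_def abs_mult)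
  also have "\<dots> \<le> norm y * c * exp (-(norm y)\<^sup>2/(2 * S\<^sup>2)) / S ^ (N + 2)"
    using S by (intro divide_right_mono mult_right_mono component_le_norm_cart) (auto simp: c_def)
  also have "\<dots> = c / S ^ (N + 1) * (\<rho> * exp (-\<rho>\<^sup>2/2))"
    using S(1) unfolding \<rho>(2) by (simp add: field_simps power_mult_distrib)
  also have "\<dots> \<le> c / S ^ (N + 1) * gauss_profile \<rho>"
  proof -
    have "\<rho> \<le> (1 + \<rho>) ^ 3"
      using \<rho> by (smt (verit) self_le_power zero_less_numeral)
    then have "\<rho> * exp (-\<rho>\<^sup>2/2) \<le> gauss_profile \<rho>"
      unfolding gauss_profile_def using \<rho> by (intro mult_mono) auto
    then show ?thesis
      using S by (intro mult_left_mono) (auto simp: c_def)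
  qed
  finally show ?thesis
    by (simp add: c_def N_def S_def \<rho>_def)
qed

lemma has_real_derivative_gauss_shape:
  fixes a c Y :: real and N :: nat
  assumes "0 < \<sigma>"
  shows "((\<lambda>\<sigma>. - a * c * exp (-Y/(2 * \<sigma>\<^sup>2)) / \<sigma> ^ (N + 2)) has_real_derivative
           (- a * c * exp (-Y/(2 * \<sigma>\<^sup>2)) * (Y/\<sigma>\<^sup>2 - (real N + 2)) / \<sigma> ^ (N + 3))) (at \<sigma>)"
  using assms
  apply (auto intro!: derivative_eq_intros)
  apply (simp add: field_simps)
  apply (simp add: power_add eval_nat_numeral algebra_simps)
  apply (cases N, auto)
  done

lemma gauss_profile_moment_le:
  assumes \<rho>: "0 \<le> \<rho>" and M: "1 \<le> M"
  shows "\<rho> * exp (-\<rho>\<^sup>2/4) * (\<rho>\<^sup>2 + M) \<le> M * gauss_profile \<rho>"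
proof -
  have "\<rho> * (\<rho>\<^sup>2 + M) = \<rho> ^ 3 + M * \<rho>"
    by (simp add: power2_eq_square power3_eq_cube algebra_simps)
  also have "\<dots> \<le> M * \<rho> ^ 3 + M * (1 + 3 * \<rho> + 3 * \<rho>\<^sup>2)"
    using \<rho> M by (intro add_mono) (auto intro!: mult_right_mono[of 1 M, simplified] mult_left_mono
        simp: power2_eq_square)
  also have "\<dots> = M * (1 + \<rho>) ^ 3"
    by (simp add: power2_eq_square power3_eq_cube algebra_simps)
  finally have "\<rho> * (\<rho>\<^sup>2 + M) * exp (-\<rho>\<^sup>2/4) \<le> M * (1 + \<rho>) ^ 3 * exp (-\<rho>\<^sup>2/8)"
    by (rule mult_mono) (use \<rho> M in auto)
  then show ?thesis
    by (simp add: gauss_profile_def mult_ac)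
qed

lemma gauss_shape_deriv_le:
  assumes t: "0 < t" "t \<le> \<xi>\<^sup>2" "\<xi>\<^sup>2 \<le> 2 * t" "0 < \<xi>" and a: "\<bar>a\<bar> \<le> r"
  shows "\<bar>a\<bar> * exp (-r\<^sup>2/(2 * \<xi>\<^sup>2)) * \<bar>r\<^sup>2/\<xi>\<^sup>2 - (real N + 2)\<bar> / \<xi> ^ (N + 3)
     \<le> (real N + 2) / sqrt t ^ (N + 2) * gauss_profile (r / sqrt t)"
proof -
  define T where "T = sqrt t"
  define \<rho> where "\<rho> = r / T"
  have T: "0 < T" "T\<^sup>2 = t" "T \<le> \<xi>"
    using t by (auto simp: T_def real_le_lsqrt)
  have r: "0 \<le> r" "r = \<rho> * T"
    using a T by (auto simp: \<rho>_def)
  have "\<rho>\<^sup>2 * \<xi>\<^sup>2 \<le> \<rho>\<^sup>2 * (2 * t)"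
    using t by (intro mult_left_mono) auto
  then have "exp (-r\<^sup>2/(2 * \<xi>\<^sup>2)) \<le> exp (-\<rho>\<^sup>2/4)"
    using t T unfolding r(2) by (simp add: power_mult_distrib field_simps)
  moreover have "\<bar>r\<^sup>2/\<xi>\<^sup>2 - (real N + 2)\<bar> \<le> \<rho>\<^sup>2 + (real N + 2)"
  proof -
    have "r\<^sup>2/\<xi>\<^sup>2 \<le> r\<^sup>2/t"
      using t by (intro divide_left_mono) auto
    moreover have "r\<^sup>2/t = \<rho>\<^sup>2"
      using T unfolding r(2) by (auto simp: power_mult_distrib)
    moreover have "0 \<le> r\<^sup>2/\<xi>\<^sup>2"
      by simp
    ultimately show ?thesis
      unfolding abs_le_iff by linarith
  qed
  ultimately have "\<bar>a\<bar> * exp (-r\<^sup>2/(2 * \<xi>\<^sup>2)) * \<bar>r\<^sup>2/\<xi>\<^sup>2 - (real N + 2)\<bar>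
      \<le> r * exp (-\<rho>\<^sup>2/4) * (\<rho>\<^sup>2 + (real N + 2))"
    using a by (intro mult_mono) auto
  then have "\<bar>a\<bar> * exp (-r\<^sup>2/(2 * \<xi>\<^sup>2)) * \<bar>r\<^sup>2/\<xi>\<^sup>2 - (real N + 2)\<bar> / \<xi> ^ (N + 3)
      \<le> r * exp (-\<rho>\<^sup>2/4) * (\<rho>\<^sup>2 + (real N + 2)) / T ^ (N + 3)"
    using T r by (intro frac_le power_mono) auto
  also have "\<dots> = \<rho> * exp (-\<rho>\<^sup>2/4) * (\<rho>\<^sup>2 + (real N + 2)) / T ^ (N + 2)"
  proof -
    have cancel: "x * T * e * m / (P * T) = x * e * m / P" for x e m P :: real
      using T(1) by simp
    have "T ^ (N + 3) = T ^ (N + 2) * T"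
      by (simp add: power_add power2_eq_square power3_eq_cube mult.assoc)
    then show ?thesis
      unfolding r(2) by (simp only: cancel)
  qed
  also have "\<dots> \<le> (real N + 2) * gauss_profile \<rho> / T ^ (N + 2)"
    using T(1) r(1) by (intro divide_right_mono gauss_profile_moment_le) (auto simp: \<rho>_def)
  finally show ?thesis
    unfolding T_def \<rho>_def by (simp only: times_divide_eq_left)
qed

lemma heat_kernel_deriv_time_increment_le:
  fixes y :: "real^'q::finite"
  assumes t: "0 < t" "t \<le> t'" "t' \<le> 2 * t"
  shows "\<bar>heat_kernel_deriv t l y - heat_kernel_deriv t' l y\<bar>
     \<le> (t' - t) / t * ((2*pi) powr (-real CARD('q)/2) * (real CARD('q) + 2)) / sqrt t ^ (CARD('q) + 1)
        * gauss_profile (norm y / sqrt t)"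
proof (cases "t = t'")
  case False
  define c where "c = (2*pi) powr (-real CARD('q)/2)"
  define N where "N = CARD('q)"
  define T where "T = sqrt t"
  define T' where "T' = sqrt t'"
  \<comment> \<open>Parametrising time by \<sigma> = sqrt s keeps every power of \<sigma> a natural number.\<close>
  define H where "H \<sigma> = - (y$l) * c * exp (-(norm y)\<^sup>2/(2 * \<sigma>\<^sup>2)) / \<sigma> ^ (N + 2)" for \<sigma>
  define H' where "H' \<sigma> = - (y$l) * c * exp (-(norm y)\<^sup>2/(2 * \<sigma>\<^sup>2))
      * ((norm y)\<^sup>2/\<sigma>\<^sup>2 - (real N + 2)) / \<sigma> ^ (N + 3)" for \<sigma>
  have T: "0 < T" "T < T'" "T\<^sup>2 = t" "T'\<^sup>2 = t'"
    using t False by (auto simp: T_def T'_def)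
  have c: "0 \<le> c"
    by (simp add: c_def)
  have H_T: "heat_kernel_deriv t l y = H T" "heat_kernel_deriv t' l y = H T'"
    using heat_kernel_deriv_sq_eq[of T l y] heat_kernel_deriv_sq_eq[of T' l y] T
    by (auto simp: H_def c_def N_def)
  have "DERIV H \<sigma> :> H' \<sigma>" if "T \<le> \<sigma>" for \<sigma>
    unfolding H_def H'_def using that T(1) by (intro has_real_derivative_gauss_shape) simp
  then obtain \<xi> where \<xi>: "T < \<xi>" "\<xi> < T'" "H T' - H T = (T' - T) * H' \<xi>"
    using MVT2[OF T(2)] by blast
  have "\<bar>heat_kernel_deriv t l y - heat_kernel_deriv t' l y\<bar> = (T' - T) * \<bar>H' \<xi>\<bar>"
    using H_T \<xi>(3) T by (simp add: abs_minus_commute abs_mult)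
  also have "\<dots> \<le> (t' - t) / T * (c * ((real N + 2) / T ^ (N + 2) * gauss_profile (norm y / T)))"
  proof (rule mult_mono)
    have "(T' - T) * T \<le> (T' - T) * (T' + T)"
      using T by (intro mult_left_mono) auto
    also have "\<dots> = t' - t"
      using T by (simp add: power2_eq_square algebra_simps)
    finally show "T' - T \<le> (t' - t) / T"
      using T by (simp add: field_simps)
    have "T\<^sup>2 \<le> \<xi>\<^sup>2" "\<xi>\<^sup>2 \<le> T'\<^sup>2"
      using \<xi> T by (intro power_mono; simp)+
    then have "t \<le> \<xi>\<^sup>2" "\<xi>\<^sup>2 \<le> 2 * t"
      using T t by auto
    then have "\<bar>y$l\<bar> * exp (-(norm y)\<^sup>2/(2 * \<xi>\<^sup>2)) * \<bar>(norm y)\<^sup>2/\<xi>\<^sup>2 - (real N + 2)\<bar> / \<xi> ^ (N + 3)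
        \<le> (real N + 2) / T ^ (N + 2) * gauss_profile (norm y / T)"
      unfolding T_def using t \<xi> T by (intro gauss_shape_deriv_le component_le_norm_cart) auto
    then have "c * (\<bar>y$l\<bar> * exp (-(norm y)\<^sup>2/(2 * \<xi>\<^sup>2)) * \<bar>(norm y)\<^sup>2/\<xi>\<^sup>2 - (real N + 2)\<bar>
          / \<xi> ^ (N + 3))
        \<le> c * ((real N + 2) / T ^ (N + 2) * gauss_profile (norm y / T))"
      by (rule mult_left_mono) (rule c)
    moreover have "\<bar>H' \<xi>\<bar> = c * (\<bar>y$l\<bar> * exp (-(norm y)\<^sup>2/(2 * \<xi>\<^sup>2))
        * \<bar>(norm y)\<^sup>2/\<xi>\<^sup>2 - (real N + 2)\<bar> / \<xi> ^ (N + 3))"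
      unfolding H'_def using c \<xi> T by (simp add: abs_mult abs_divide mult_ac)
    ultimately show "\<bar>H' \<xi>\<bar> \<le> c * ((real N + 2) / T ^ (N + 2) * gauss_profile (norm y / T))"
      by simp
  qed (use T(1) t(2) in simp_all)
  also have "\<dots> = (t' - t) / t * (c * (real N + 2)) / T ^ (N + 1) * gauss_profile (norm y / T)"
    using T(1) unfolding T(3)[symmetric] by (simp add: field_simps power2_eq_square)
  finally show ?thesis
    by (simp add: c_def N_def T_def)
qed simp

lemma gauss_shift_le:
  fixes a b \<delta> :: real
  assumes t: "0 < t" and \<delta>: "\<delta> \<le> sqrt t" and ab: "\<bar>a - b\<bar> \<le> \<delta>" and a: "0 \<le> a" and b: "0 \<le> b"
  shows "exp (-b\<^sup>2/(4 * t)) * (1 + b\<^sup>2/t) \<le> 2 * exp (1/4) * gauss_profile (a / sqrt t)"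
proof -
  define T where "T = sqrt t"
  define \<rho> where "\<rho> = a / T"
  have T: "0 < T" "T\<^sup>2 = t"
    using t by (auto simp: T_def)
  have \<rho>: "0 \<le> \<rho>" "a = \<rho> * T"
    using a T by (auto simp: \<rho>_def)
  have "0 \<le> \<delta>"
    using ab by linarith
  then have \<delta>t: "\<delta>\<^sup>2 \<le> t" "0 \<le> \<delta>"
    using power_mono[OF \<delta>, of 2] t by auto
  have "a\<^sup>2 \<le> (b + \<delta>)\<^sup>2"
    using ab a by (intro power_mono) auto
  also have "\<dots> \<le> 2 * b\<^sup>2 + 2 * \<delta>\<^sup>2"
    by (simp add: power2_sum) (use sum_squares_bound[of b \<delta>] in linarith)
  finally have "-b\<^sup>2/(4 * t) \<le> 1/4 - (a\<^sup>2/t)/8"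
    using \<delta>t t by (simp add: field_simps)
  moreover have "a\<^sup>2/t = \<rho>\<^sup>2"
    using T unfolding \<rho>(2) by (auto simp: power_mult_distrib)
  ultimately have exp_le: "exp (-b\<^sup>2/(4 * t)) \<le> exp (1/4) * exp (-\<rho>\<^sup>2/8)"
    by (simp add: exp_add[symmetric])
  have "b \<le> T * (\<rho> + 1)"
    using ab \<delta> unfolding \<rho>(2) T_def by (simp add: algebra_simps)
  then have "b\<^sup>2 \<le> (\<rho> + 1)\<^sup>2 * t"
    using b T by (metis power_mono power_mult_distrib mult.commute)
  then have "1 + b\<^sup>2/t \<le> 1 + (1 + \<rho>)\<^sup>2"
    using t by (simp add: divide_le_eq add.commute)
  also have "\<dots> \<le> 2 * (1 + \<rho>) ^ 3"
  proof -
    have "0 \<le> \<rho> * (2 * \<rho>\<^sup>2 + 5 * \<rho> + 4)"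
      using \<rho> by simp
    then show ?thesis
      by (simp add: power2_eq_square power3_eq_cube algebra_simps)
  qed
  finally have "exp (-b\<^sup>2/(4 * t)) * (1 + b\<^sup>2/t) \<le> exp (1/4) * exp (-\<rho>\<^sup>2/8) * (2 * (1 + \<rho>) ^ 3)"
    using exp_le t by (intro mult_mono) auto
  then show ?thesis
    by (simp add: gauss_profile_def \<rho>_def T_def mult_ac)
qed

lemma abs_line_factor_le:
  fixes z d :: "real^'q::finite"
  assumes "0 < t" "t \<le> s"
  shows "\<bar>d$l - z$l * (z \<bullet> d) / s\<bar> \<le> norm d * (1 + (norm z)\<^sup>2/t)"
proof -
  have "\<bar>z$l * (z \<bullet> d) / s\<bar> \<le> norm z * (norm z * norm d) / s"
    using assms by (simp add: abs_mult divide_right_mono mult_mono component_le_norm_cart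
        Cauchy_Schwarz_ineq2)
  also have "\<dots> \<le> norm z * (norm z * norm d) / t"
    using assms by (intro divide_left_mono) auto
  finally have "\<bar>z$l * (z \<bullet> d) / s\<bar> \<le> norm d * ((norm z)\<^sup>2/t)"
    by (simp add: power2_eq_square mult_ac)
  moreover have "\<bar>d$l\<bar> \<le> norm d"
    by (rule component_le_norm_cart)
  ultimately show ?thesis
    using abs_triangle_ineq4[of "d$l" "z$l * (z \<bullet> d) / s"] by (simp add: distrib_left)
qed

lemma norm_add_scaleR_sq:
  fixes y d :: "'a::real_inner"
  shows "(norm (y + \<theta> *\<^sub>R d))\<^sup>2 = (norm y)\<^sup>2 + 2 * \<theta> * (y \<bullet> d) + \<theta>\<^sup>2 * (norm d)\<^sup>2"
  unfolding power2_norm_eq_inner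
  by (simp add: inner_add_left inner_add_right inner_commute algebra_simps power2_eq_square)

lemma has_real_derivative_heat_kernel_deriv_line:
  fixes y d :: "real^'q::finite" and \<theta> :: real
  assumes s: "0 < s"
  defines "z \<equiv> y + \<theta> *\<^sub>R d"
  shows "((\<lambda>\<theta>. heat_kernel_deriv s l (y + \<theta> *\<^sub>R d)) has_real_derivative
      - ((2*pi) powr (-real CARD('q)/2) / sqrt s ^ (CARD('q) + 2)) * exp (-(norm z)\<^sup>2/(2 * s))
        * (d$l - z$l * (z \<bullet> d) / s)) (at \<theta>)"
proof -
  define K where "K = (2*pi) powr (-real CARD('q)/2) / sqrt s ^ (CARD('q) + 2)"
  define Q where "Q \<theta> = -((norm y)\<^sup>2 + 2 * \<theta> * (y \<bullet> d) + \<theta>\<^sup>2 * (norm d)\<^sup>2)/(2 * s)" for \<theta>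
  have line: "heat_kernel_deriv s l (y + \<theta> *\<^sub>R d) = - K * (y$l + \<theta> * d$l) * exp (Q \<theta>)" for \<theta>
  proof -
    have "heat_kernel_deriv s l (y + \<theta> *\<^sub>R d) = - ((y + \<theta> *\<^sub>R d)$l) * (2*pi) powr (-real CARD('q)/2)
        * exp (-(norm (y + \<theta> *\<^sub>R d))\<^sup>2/(2 * s)) / sqrt s ^ (CARD('q) + 2)"
      using heat_kernel_deriv_sq_eq[of "sqrt s" l "y + \<theta> *\<^sub>R d"] s by simp
    then show ?thesis
      using s by (simp add: K_def Q_def norm_add_scaleR_sq field_simps)
  qed
  have "(Q has_real_derivative (-((y \<bullet> d) + \<theta> * (norm d)\<^sup>2)/s)) (at \<theta>)"
    unfolding Q_def using s by (auto intro!: derivative_eq_intros simp: field_simps)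
  then have deriv: "((\<lambda>\<theta>. - K * (y$l + \<theta> * d$l) * exp (Q \<theta>)) has_real_derivative
      - K * exp (Q \<theta>) * (d$l + (y$l + \<theta> * d$l) * (-((y \<bullet> d) + \<theta> * (norm d)\<^sup>2)/s))) (at \<theta>)"
    using s by (auto intro!: derivative_eq_intros simp: field_simps)
  have z: "Q \<theta> = -(norm z)\<^sup>2/(2 * s)" "y$l + \<theta> * d$l = z$l" "(y \<bullet> d) + \<theta> * (norm d)\<^sup>2 = z \<bullet> d"
    by (simp_all add: Q_def z_def norm_add_scaleR_sq inner_add_left power2_norm_eq_inner[symmetric])
  have val: "- K * exp (Q \<theta>) * (d$l + (y$l + \<theta> * d$l) * (-((y \<bullet> d) + \<theta> * (norm d)\<^sup>2)/s))
      = - K * exp (-(norm z)\<^sup>2/(2 * s)) * (d$l - z$l * (z \<bullet> d) / s)"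
    unfolding z by simp
  have fun_eq: "(\<lambda>\<theta>. heat_kernel_deriv s l (y + \<theta> *\<^sub>R d)) = (\<lambda>\<theta>. - K * (y$l + \<theta> * d$l) * exp (Q \<theta>))"
    using line by (rule ext)
  show ?thesis
    unfolding K_def[symmetric] fun_eq val[symmetric] by (rule deriv)
qed

lemma heat_kernel_deriv_space_increment_le:
  fixes y d :: "real^'q::finite"
  assumes t: "0 < t" "t \<le> s" "s \<le> 2 * t" and d: "norm d \<le> sqrt t"
  shows "\<bar>heat_kernel_deriv s l y - heat_kernel_deriv s l (y + d)\<bar>
     \<le> norm d / sqrt t * (2 * exp (1/4) * (2*pi) powr (-real CARD('q)/2)) / sqrt t ^ (CARD('q) + 1)
        * gauss_profile (norm y / sqrt t)"
proof -
  define c where "c = (2*pi) powr (-real CARD('q)/2)"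
  define N where "N = CARD('q)"
  define T where "T = sqrt t"
  define f where "f \<theta> = heat_kernel_deriv s l (y + \<theta> *\<^sub>R d)" for \<theta>
  define f' where "f' \<theta> = - (c / sqrt s ^ (N + 2)) * exp (-(norm (y + \<theta> *\<^sub>R d))\<^sup>2/(2 * s))
      * (d$l - (y + \<theta> *\<^sub>R d)$l * ((y + \<theta> *\<^sub>R d) \<bullet> d) / s)" for \<theta>
  have T: "0 < T" "T \<le> sqrt s"
    using t by (auto simp: T_def)
  have c: "0 \<le> c"
    by (simp add: c_def)
  have "DERIV f \<theta> :> f' \<theta>" for \<theta>
    unfolding f_def f'_def c_def N_def using t by (intro has_real_derivative_heat_kernel_deriv_line) simp
  then obtain \<xi> where \<xi>: "0 < \<xi>" "\<xi> < 1" "f 1 - f 0 = (1 - 0) * f' \<xi>"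
    using MVT2[of 0 1 f f'] by auto
  define z where "z = y + \<xi> *\<^sub>R d"
  have "heat_kernel_deriv s l y - heat_kernel_deriv s l (y + d) = - f' \<xi>"
    using \<xi>(3) by (simp add: f_def)
  then have "\<bar>heat_kernel_deriv s l y - heat_kernel_deriv s l (y + d)\<bar>
      = c / sqrt s ^ (N + 2) * exp (-(norm z)\<^sup>2/(2 * s)) * \<bar>d$l - z$l * (z \<bullet> d) / s\<bar>"
    unfolding f'_def z_def using c t by (simp add: abs_mult abs_divide)
  also have "\<dots> \<le> c / T ^ (N + 2) * exp (-(norm z)\<^sup>2/(4 * t)) * (norm d * (1 + (norm z)\<^sup>2/t))"
    using t c T by (intro mult_mono divide_left_mono power_mono abs_line_factor_le)
      (auto simp: frac_le)
  also have "\<dots> = c * norm d / T ^ (N + 2) * (exp (-(norm z)\<^sup>2/(4 * t)) * (1 + (norm z)\<^sup>2/t))"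
    by simp
  also have "\<dots> \<le> c * norm d / T ^ (N + 2) * (2 * exp (1/4) * gauss_profile (norm y / T))"
  proof (unfold T_def, intro mult_left_mono gauss_shift_le)
    have "norm (\<xi> *\<^sub>R d) \<le> norm d"
      using \<xi> by (simp add: mult_left_le_one_le)
    then show "\<bar>norm y - norm z\<bar> \<le> norm d"
      unfolding z_def by (smt (verit, best) norm_triangle_ineq2 norm_triangle_ineq4 norm_minus_commute
          add_diff_cancel_left')
  qed (use t d c in simp_all)
  also have "\<dots> = norm d / T * (2 * exp (1/4) * c) / T ^ (N + 1) * gauss_profile (norm y / T)"
    using T(1) by (simp add: field_simps)
  finally show ?thesis
    by (simp add: c_def N_def T_def)
qed

section \<open>Energy of heat kernel increments\<close>

lemma nn_integral_scaled_gauss_profile: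
  fixes x :: "'a::euclidean_space"
  assumes s: "0 < s" and A: "0 \<le> A"
    and IG: "(\<integral>\<^sup>+u. ennreal (gauss_profile (norm (u::'a))) \<partial>lborel) = ennreal IG" "0 \<le> IG"
  shows "(\<integral>\<^sup>+w. ennreal (A / sqrt s ^ (DIM('a) + 1) * gauss_profile (norm (w - x) / sqrt s)) \<partial>lborel)
     = ennreal (A * IG / sqrt s)"
proof -
  have "(\<integral>\<^sup>+w. ennreal (A / sqrt s ^ (DIM('a) + 1) * gauss_profile (norm (w - x) / sqrt s)) \<partial>lborel)
      = ennreal (A / sqrt s ^ (DIM('a) + 1)) * (\<integral>\<^sup>+w. ennreal (gauss_profile (norm (w - x) / sqrt s)) \<partial>lborel)"
  proof -
    have "(\<integral>\<^sup>+w. ennreal (A / sqrt s ^ (DIM('a) + 1) * gauss_profile (norm (w - x) / sqrt s)) \<partial>lborel)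
        = (\<integral>\<^sup>+w. ennreal (A / sqrt s ^ (DIM('a) + 1)) * ennreal (gauss_profile (norm (w - x) / sqrt s)) \<partial>lborel)"
      using s A by (intro nn_integral_cong ennreal_mult) (auto intro: gauss_profile_nonneg)
    then show ?thesis
      by (simp add: nn_integral_cmult)
  qed
  also have "\<dots> = ennreal (A / sqrt s ^ (DIM('a) + 1)) * (ennreal (sqrt s ^ DIM('a)) * ennreal IG)"
    using s IG by (simp add: nn_integral_gauss_profile_rescale)
  also have "\<dots> = ennreal (A / sqrt s ^ (DIM('a) + 1) * (sqrt s ^ DIM('a) * IG))"
  proof -
    have "ennreal a * (ennreal b * ennreal c) = ennreal (a * (b * c))"
      if "0 \<le> a" "0 \<le> b" "0 \<le> c" for a b c :: real
      using that by (simp add: ennreal_mult)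
    then show ?thesis
      using s A IG by simp
  qed
  also have "A / sqrt s ^ (DIM('a) + 1) * (sqrt s ^ DIM('a) * IG) = A * IG / sqrt s"
    using s by simp
  finally show ?thesis .
qed

lemma gauss_term_le:
  assumes "0 < t" "t \<le> s" "0 \<le> A" "0 \<le> \<rho>"
  shows "A / sqrt s ^ n * gauss_profile \<rho> \<le> A * (16 ^ 3 * fact 3) / sqrt t ^ n"
proof -
  have "A / sqrt s ^ n \<le> A / sqrt t ^ n"
    using assms by (intro divide_left_mono power_mono) auto
  then have "A / sqrt s ^ n * gauss_profile \<rho> \<le> A / sqrt t ^ n * (16 ^ 3 * fact 3)"
    using assms by (intro mult_mono gauss_profile_le gauss_profile_nonneg) auto
  then show ?thesis
    by simp
qed

lemma riesz_energy_heat_kernel_deriv_increment_far: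
  fixes K :: real and l :: "'q::finite"
  assumes \<alpha>: "0 < \<alpha>" "\<alpha> < real CARD('q)"
  shows "\<exists>C\<ge>0. \<forall>(x::real^'q) x' t t'. 0 < t \<and> t \<le> t' \<and> t' \<le> K \<longrightarrow>
     riesz_energy \<alpha> (\<lambda>w. heat_kernel_deriv t l (w - x) - heat_kernel_deriv t' l (w - x'))
       \<le> ennreal (C * t powr (-1 - \<alpha>/2))"
proof -
  define c where "c = (2*pi) powr (-real CARD('q)/2)"
  define N where "N = CARD('q)"
  define I where "I = enn2real (\<integral>\<^sup>+u. ennreal (indicator (ball (0::real^'q) 1) u * norm u powr (-\<alpha>)) \<partial>lborel)"
  define IG where "IG = enn2real (\<integral>\<^sup>+u. ennreal (gauss_profile (norm (u::real^'q))) \<partial>lborel)"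
  define Gm :: real where "Gm = 16 ^ 3 * fact 3"
  define B1 where "B1 = 2 * c * IG"
  define Binf where "Binf = 2 * c * Gm"
  have I: "(\<integral>\<^sup>+u. ennreal (indicator (ball (0::real^'q) 1) u * norm u powr (-\<alpha>)) \<partial>lborel) = ennreal I"
    using nn_integral_ball_norm_powr_finite[of \<alpha>, where 'a="real^'q"] \<alpha> by (simp add: I_def)
  have IG: "(\<integral>\<^sup>+u. ennreal (gauss_profile (norm (u::real^'q))) \<partial>lborel) = ennreal IG"
    using nn_integral_gauss_profile_finite[where 'a="real^'q"] by (simp add: IG_def)
  have c: "0 \<le> c" and IG0: "0 \<le> IG" and I0: "0 \<le> I"
    by (simp_all add: c_def IG_def I_def)
  show ?thesis
  proof (intro exI[of _ "(1 + K powr (\<alpha>/2)) * B1\<^sup>2 + B1 * Binf * I"] conjI allI impI)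
    show "0 \<le> (1 + K powr (\<alpha>/2)) * B1\<^sup>2 + B1 * Binf * I"
      using c IG0 I0 by (simp add: B1_def Binf_def Gm_def)
    fix x x' :: "real^'q" and t t' :: real
    assume "0 < t \<and> t \<le> t' \<and> t' \<le> K"
    then have t: "0 < t" "t \<le> t'" "t' \<le> K"
      by auto
    define F where "F w = c / sqrt t ^ (N + 1) * gauss_profile (norm (w - x) / sqrt t)
        + c / sqrt t' ^ (N + 1) * gauss_profile (norm (w - x') / sqrt t')" for w
    have "F \<in> borel_measurable borel"
      unfolding F_def by measurable
    moreover have "\<bar>heat_kernel_deriv t l (w - x) - heat_kernel_deriv t' l (w - x')\<bar> \<le> F w" for w
      using abs_heat_kernel_deriv_le[of t l "w - x"] abs_heat_kernel_deriv_le[of t' l "w - x'"] t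
      unfolding F_def c_def N_def by linarith
    moreover have "F w \<le> Binf * 1 / sqrt t ^ (DIM(real^'q) + 1)" for w
      using gauss_term_le[of t t c "norm (w - x) / sqrt t" "N + 1"]
        gauss_term_le[of t t' c "norm (w - x') / sqrt t'" "N + 1"] t c
      by (simp add: F_def Binf_def Gm_def N_def)
    moreover have "(\<integral>\<^sup>+w. ennreal (F w) \<partial>lborel) \<le> ennreal (B1 * 1 / sqrt t)"
    proof -
      have "(\<integral>\<^sup>+w. ennreal (F w) \<partial>lborel)
          = (\<integral>\<^sup>+w. ennreal (c / sqrt t ^ (N + 1) * gauss_profile (norm (w - x) / sqrt t)) \<partial>lborel)
          + (\<integral>\<^sup>+w. ennreal (c / sqrt t' ^ (N + 1) * gauss_profile (norm (w - x') / sqrt t')) \<partial>lborel)"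
        unfolding F_def using t c
        by (subst nn_integral_add[symmetric], measurable)
          (intro nn_integral_cong ennreal_plus mult_nonneg_nonneg divide_nonneg_nonneg gauss_profile_nonneg;
            simp)
      also have "\<dots> = ennreal (c * IG / sqrt t) + ennreal (c * IG / sqrt t')"
        using nn_integral_scaled_gauss_profile[OF _ c IG IG0] t by (simp add: N_def)
      also have "\<dots> = ennreal (c * IG / sqrt t + c * IG / sqrt t')"
        using t c IG0 by (simp add: ennreal_plus)
      also have "\<dots> \<le> ennreal (B1 * 1 / sqrt t)"
      proof (intro ennreal_leI)
        have "c * IG / sqrt t' \<le> c * IG / sqrt t"
          using t c IG0 by (intro divide_left_mono) auto
        moreover have "B1 * 1 / sqrt t = c * IG / sqrt t + c * IG / sqrt t"
          unfolding B1_def by (simp add: field_simps)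
        ultimately show "c * IG / sqrt t + c * IG / sqrt t' \<le> B1 * 1 / sqrt t"
          by linarith
      qed
      finally show ?thesis .
    qed
    ultimately have "riesz_energy \<alpha> (\<lambda>w. heat_kernel_deriv t l (w - x) - heat_kernel_deriv t' l (w - x'))
        \<le> ennreal (((1 + K powr (\<alpha>/2)) * B1\<^sup>2 + B1 * Binf * I) * t powr (-1 - \<alpha>/2) * 1\<^sup>2)"
      using t \<alpha> c IG0 I0 by (intro riesz_energy_le_scaled[where I=I]) (auto simp: I B1_def)
    then show "riesz_energy \<alpha> (\<lambda>w. heat_kernel_deriv t l (w - x) - heat_kernel_deriv t' l (w - x'))
        \<le> ennreal (((1 + K powr (\<alpha>/2)) * B1\<^sup>2 + B1 * Binf * I) * t powr (-1 - \<alpha>/2))"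
      by simp
  qed
qed

lemma riesz_energy_heat_kernel_deriv_increment_near:
  fixes K :: real and l :: "'q::finite"
  assumes \<alpha>: "0 < \<alpha>" "\<alpha> < real CARD('q)"
  shows "\<exists>C\<ge>0. \<forall>(x::real^'q) x' t t'. 0 < t \<and> t \<le> t' \<and> t' \<le> K \<and> (norm (x - x'))\<^sup>2 + \<bar>t - t'\<bar> < t \<longrightarrow>
     riesz_energy \<alpha> (\<lambda>w. heat_kernel_deriv t l (w - x) - heat_kernel_deriv t' l (w - x'))
       \<le> ennreal (C * t powr (-1 - \<alpha>/2) * (((norm (x - x'))\<^sup>2 + \<bar>t - t'\<bar>) / t))"
proof -
  define c where "c = (2*pi) powr (-real CARD('q)/2)"
  define N where "N = CARD('q)"
  define I where "I = enn2real (\<integral>\<^sup>+u. ennreal (indicator (ball (0::real^'q) 1) u * norm u powr (-\<alpha>)) \<partial>lborel)"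
  define IG where "IG = enn2real (\<integral>\<^sup>+u. ennreal (gauss_profile (norm (u::real^'q))) \<partial>lborel)"
  define Gm :: real where "Gm = 16 ^ 3 * fact 3"
  define M where "M = c * (real N + 2) + 2 * exp (1/4) * c"
  define B1 where "B1 = M * IG"
  define Binf where "Binf = M * Gm"
  have I: "(\<integral>\<^sup>+u. ennreal (indicator (ball (0::real^'q) 1) u * norm u powr (-\<alpha>)) \<partial>lborel) = ennreal I"
    using nn_integral_ball_norm_powr_finite[of \<alpha>, where 'a="real^'q"] \<alpha> by (simp add: I_def)
  have IG: "(\<integral>\<^sup>+u. ennreal (gauss_profile (norm (u::real^'q))) \<partial>lborel) = ennreal IG"
    using nn_integral_gauss_profile_finite[where 'a="real^'q"] by (simp add: IG_def)
  have c: "0 \<le> c" and IG0: "0 \<le> IG" and I0: "0 \<le> I"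
    by (simp_all add: c_def IG_def I_def)
  have M: "0 \<le> M"
    using c by (simp add: M_def)
  show ?thesis
  proof (intro exI[of _ "(1 + K powr (\<alpha>/2)) * B1\<^sup>2 + B1 * Binf * I"] conjI allI impI)
    show "0 \<le> (1 + K powr (\<alpha>/2)) * B1\<^sup>2 + B1 * Binf * I"
      using M IG0 I0 by (simp add: B1_def Binf_def Gm_def)
    fix x x' :: "real^'q" and t t' :: real
    define D where "D = (norm (x - x'))\<^sup>2 + \<bar>t - t'\<bar>"
    define \<sigma> where "\<sigma> = sqrt (D / t)"
    assume "0 < t \<and> t \<le> t' \<and> t' \<le> K \<and> (norm (x - x'))\<^sup>2 + \<bar>t - t'\<bar> < t"
    then have t: "0 < t" "t \<le> t'" "t' \<le> K" and near: "D < t"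
      by (auto simp: D_def)
    have D0: "0 \<le> D" "D / t \<le> 1"
      using near t by (auto simp: D_def)
    have \<sigma>: "0 \<le> \<sigma>" "\<sigma>\<^sup>2 = D / t"
      using D0 t by (auto simp: \<sigma>_def)
    have "D = (norm (x - x'))\<^sup>2 + (t' - t)" "0 \<le> (norm (x - x'))\<^sup>2"
      using t by (simp_all add: D_def)
    then have t2: "t' \<le> 2 * t"
      using near by linarith
    have "(t' - t) / t \<le> D / t"
      using t by (intro divide_right_mono) (auto simp: D_def)
    also have "D / t \<le> \<sigma>"
    proof -
      have "(D / t)\<^sup>2 \<le> D / t"
        unfolding power2_eq_square using D0 t by (intro mult_left_le_one_le) auto
      then show ?thesis
        unfolding \<sigma>_def by (rule real_le_rsqrt)
    qed
    finally have time: "(t' - t) / t \<le> \<sigma>" .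
    have "norm (x - x') / sqrt t = sqrt ((norm (x - x'))\<^sup>2 / t)"
      by (simp add: real_sqrt_divide)
    also have "\<dots> \<le> \<sigma>"
      unfolding \<sigma>_def D_def using t by (intro real_sqrt_le_mono divide_right_mono) auto
    finally have space: "norm (x - x') / sqrt t \<le> \<sigma>" .
    then have dn: "norm (x - x') \<le> sqrt t"
      using \<sigma> D0 t by (simp add: divide_le_eq \<sigma>_def real_sqrt_le_1_iff order_trans)
    define F where "F w = M * \<sigma> / sqrt t ^ (N + 1) * gauss_profile (norm (w - x) / sqrt t)" for w
    have "F \<in> borel_measurable borel"
      unfolding F_def by measurable
    moreover have "\<bar>heat_kernel_deriv t l (w - x) - heat_kernel_deriv t' l (w - x')\<bar> \<le> F w" for w
    proof -
      define y where "y = w - x"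
      define g where "g = gauss_profile (norm y / sqrt t)"
      have g: "0 \<le> g"
        using t by (simp add: g_def gauss_profile_nonneg)
      have "w - x' = y + (x - x')"
        by (simp add: y_def)
      then have "\<bar>heat_kernel_deriv t l (w - x) - heat_kernel_deriv t' l (w - x')\<bar>
          \<le> \<bar>heat_kernel_deriv t l y - heat_kernel_deriv t' l y\<bar>
            + \<bar>heat_kernel_deriv t' l y - heat_kernel_deriv t' l (y + (x - x'))\<bar>"
        by (simp add: y_def)
      also have "\<dots> \<le> (t' - t) / t * (c * (real N + 2)) / sqrt t ^ (N + 1) * g
          + norm (x - x') / sqrt t * (2 * exp (1/4) * c) / sqrt t ^ (N + 1) * g"
        using heat_kernel_deriv_time_increment_le[OF t(1,2) t2, of l y]
          heat_kernel_deriv_space_increment_le[OF t(1,2) t2 dn, of l y]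
        by (simp add: c_def N_def g_def)
      also have "\<dots> \<le> \<sigma> * (c * (real N + 2)) / sqrt t ^ (N + 1) * g
          + \<sigma> * (2 * exp (1/4) * c) / sqrt t ^ (N + 1) * g"
        using time space c g t by (intro add_mono mult_right_mono divide_right_mono) auto
      also have "\<dots> = F w"
      proof -
        have "\<sigma> * A / P * g + \<sigma> * B / P * g = (A + B) * \<sigma> / P * g" for A B P :: real
          by (simp add: add_divide_distrib ring_distribs mult.commute)
        then show ?thesis
          unfolding F_def M_def g_def y_def .
      qed
      finally show ?thesis .
    qed
    moreover have "F w \<le> Binf * \<sigma> / sqrt t ^ (DIM(real^'q) + 1)" for w
      using gauss_term_le[of t t "M * \<sigma>" "norm (w - x) / sqrt t" "N + 1"] t M \<sigma>
      by (simp add: F_def Binf_def Gm_def N_def mult_ac)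
    moreover have "(\<integral>\<^sup>+w. ennreal (F w) \<partial>lborel) \<le> ennreal (B1 * \<sigma> / sqrt t)"
      using nn_integral_scaled_gauss_profile[OF t(1) _ IG IG0, of "M * \<sigma>" x] M \<sigma>
      by (simp add: F_def N_def B1_def mult_ac)
    ultimately have "riesz_energy \<alpha> (\<lambda>w. heat_kernel_deriv t l (w - x) - heat_kernel_deriv t' l (w - x'))
        \<le> ennreal (((1 + K powr (\<alpha>/2)) * B1\<^sup>2 + B1 * Binf * I) * t powr (-1 - \<alpha>/2) * \<sigma>\<^sup>2)"
      using t \<alpha> M IG0 I0 \<sigma> by (intro riesz_energy_le_scaled[where I=I]) (auto simp: I B1_def)
    then show "riesz_energy \<alpha> (\<lambda>w. heat_kernel_deriv t l (w - x) - heat_kernel_deriv t' l (w - x'))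
        \<le> ennreal (((1 + K powr (\<alpha>/2)) * B1\<^sup>2 + B1 * Binf * I) * t powr (-1 - \<alpha>/2)
          * (((norm (x - x'))\<^sup>2 + \<bar>t - t'\<bar>) / t))"
      by (simp add: \<sigma>(2) D_def)
  qed
qed

theorem lemma4p3:
  fixes \<alpha> K :: real and l :: "'q::finite"
  assumes "0 < \<alpha>" and "\<alpha> < real CARD('q)" and "0 \<le> K"
  shows "\<exists>C::real. \<forall>(x::real^'q) x' t t'. 0 < t \<and> t \<le> t' \<and> t' \<le> K \<longrightarrow>
     (\<integral>\<^sup>+ z. (\<integral>\<^sup>+ w. ennreal (
        \<bar>(heat_kernel_deriv t l (w - x) - heat_kernel_deriv t' l (w - x')) *
         (heat_kernel_deriv t l (z - x) - heat_kernel_deriv t' l (z - x'))\<bar>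
        * (norm (w - z) powr (- \<alpha>) + 1)) \<partial>lborel) \<partial>lborel)
     \<le> ennreal (C * t powr (-1 - \<alpha> / 2) * min 1 (((norm (x - x'))\<^sup>2 + \<bar>t - t'\<bar>) / t))"
proof -
  obtain C\<^sub>1 where C\<^sub>1: "0 \<le> C\<^sub>1" "\<And>x x' t t'. 0 < t \<and> t \<le> t' \<and> t' \<le> K \<Longrightarrow>
      riesz_energy \<alpha> (\<lambda>w. heat_kernel_deriv t l (w - x) - heat_kernel_deriv t' l (w - x'))
        \<le> ennreal (C\<^sub>1 * t powr (-1 - \<alpha>/2))"
    using riesz_energy_heat_kernel_deriv_increment_far[OF assms(1,2), of K l] by blast
  obtain C\<^sub>2 where C\<^sub>2: "0 \<le> C\<^sub>2" "\<And>x x' t t'. 0 < t \<and> t \<le> t' \<and> t' \<le> K \<and> (norm (x - x'))\<^sup>2 + \<bar>t - t'\<bar> < t \<Longrightarrow>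
      riesz_energy \<alpha> (\<lambda>w. heat_kernel_deriv t l (w - x) - heat_kernel_deriv t' l (w - x'))
        \<le> ennreal (C\<^sub>2 * t powr (-1 - \<alpha>/2) * (((norm (x - x'))\<^sup>2 + \<bar>t - t'\<bar>) / t))"
    using riesz_energy_heat_kernel_deriv_increment_near[OF assms(1,2), of K l] by blast
  show ?thesis
  proof (intro exI[of _ "C\<^sub>1 + C\<^sub>2"] allI impI)
    fix x x' :: "real^'q" and t t' :: real
    assume t: "0 < t \<and> t \<le> t' \<and> t' \<le> K"
    define D where "D = (norm (x - x'))\<^sup>2 + \<bar>t - t'\<bar>"
    have "riesz_energy \<alpha> (\<lambda>w. heat_kernel_deriv t l (w - x) - heat_kernel_deriv t' l (w - x'))
        \<le> ennreal ((C\<^sub>1 + C\<^sub>2) * t powr (-1 - \<alpha> / 2) * min 1 (D / t))"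
    proof (cases "D < t")
      case True
      then have min: "min 1 (D / t) = D / t" and "0 \<le> D / t"
        using t by (auto simp: D_def)
      have "riesz_energy \<alpha> (\<lambda>w. heat_kernel_deriv t l (w - x) - heat_kernel_deriv t' l (w - x'))
          \<le> ennreal (C\<^sub>2 * t powr (-1 - \<alpha> / 2) * (D / t))"
        using C\<^sub>2(2)[of t t' x x'] t True unfolding D_def by simp
      also have "\<dots> \<le> ennreal ((C\<^sub>1 + C\<^sub>2) * t powr (-1 - \<alpha> / 2) * min 1 (D / t))"
        unfolding min using C\<^sub>1(1) \<open>0 \<le> D / t\<close> by (intro ennreal_leI mult_right_mono) auto
      finally show ?thesis .
    next
      case False
      then have min: "min 1 (D / t) = 1"
        using t by simp
      have "riesz_energy \<alpha> (\<lambda>w. heat_kernel_deriv t l (w - x) - heat_kernel_deriv t' l (w - x'))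
          \<le> ennreal (C\<^sub>1 * t powr (-1 - \<alpha> / 2))"
        using C\<^sub>1(2)[of t t' x x'] t by simp
      also have "\<dots> \<le> ennreal ((C\<^sub>1 + C\<^sub>2) * t powr (-1 - \<alpha> / 2) * min 1 (D / t))"
        unfolding min using C\<^sub>2(1) by (intro ennreal_leI) (simp add: mult_right_mono)
      finally show ?thesis .
    qed
    then show "(\<integral>\<^sup>+ z. (\<integral>\<^sup>+ w. ennreal (
        \<bar>(heat_kernel_deriv t l (w - x) - heat_kernel_deriv t' l (w - x')) *
         (heat_kernel_deriv t l (z - x) - heat_kernel_deriv t' l (z - x'))\<bar>
        * (norm (w - z) powr (- \<alpha>) + 1)) \<partial>lborel) \<partial>lborel)
      \<le> ennreal ((C\<^sub>1 + C\<^sub>2) * t powr (-1 - \<alpha> / 2) * min 1 (((norm (x - x'))\<^sup>2 + \<bar>t - t'\<bar>) / t))"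
      unfolding riesz_energy_def D_def .
  qed
qed

end
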